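(* Fix $\eta\in[0,1]$ and an integer $N\ge0$. For every policy $P(u^{+}\mid u,q)\in\mathcal P^{L}_{\pi}$ (lower-bound construction of the context), the induced stationary distribution satisfies $$\pi(S=0\mid u,q)=\bar\eta^{\,u+1}\qquad\text{for all } q\in[0:N] \text{ and all } u \text{ in the support of } U \text{ given } Q=q,$$ in particular $\pi_{S\mid U,Q}$ does not depend on the policy.
   Context: $\bar\eta=1-\eta$, $[a:b]=\{a,\dots,b\}$. Binary energy-harvesting battery law: $P(S^{+}=0\mid x,s)=\bar\eta\,\mathbb{1}\{x=s\}$ for $x\le s$, $x,s\in\{0,1\}$. Lower-bound construction: $\mathcal Q=\mathcal U=[0:N]$; $g_L(q,1)=0$ for all $q$, $g_L(q,0)=q+1$ for $q\in[0:N-1]$, $g_L(N,0)=0$; $f(u^{+},s)=s\,\mathbb{1}\{u^{+}=0\}$. A policy $P(u^{+}\mid u,q)$ induces the kernel $T(s^{+},u^{+},q^{+}\mid s,u,q)=\sum_xP(u^{+}\mid u,q)\mathbb{1}\{x=f(u^{+},s)\}\mathbb{1}\{q^{+}=g_L(q,x)\}P(s^{+}\mid x,s)$ on $\{0,1\}\times\mathcal U\times\mathcal Q$. $\mathcal P^{L}_{\pi}$: policies for which $T$ has a unique stationary distribution $\pi(s,u,q)$, such that for $q\in[0:N-1]$ the variable $U$ given $Q=q$ lies in $[0:q]$ and $P(u^{+}\mid u,q)=0$ unless $u^{+}\in\{0,u+1\}$, and for $q=N$, $U$ lies in $[0:N]$ and $P(0\mid u,N)=1$. *)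

theory Defs
  imports Complex_Main
begin

definition states :: "nat \<Rightarrow> (nat \<times> nat \<times> nat) set" where
  "states N = {(s,u,q). s \<le> 1 \<and> u \<le> N \<and> q \<le> N}"

text \<open>Battery law: P(S+ = s' | x, s), with P(S+=0|x,s) = (1-eta) [x = s] for x \<le> s.\<close>
definition battery :: "real \<Rightarrow> nat \<Rightarrow> nat \<Rightarrow> nat \<Rightarrow> real" where
  "battery \<eta> s' x s =
     (let p0 = (1 - \<eta>) * (if x = s then 1 else 0) in if s' = 0 then p0 else 1 - p0)"

definition gL :: "nat \<Rightarrow> nat \<Rightarrow> nat \<Rightarrow> nat" where
  "gL N q x = (if x = 1 then 0 else if q < N then q + 1 else 0)"

definition fL :: "nat \<Rightarrow> nat \<Rightarrow> nat" where
  "fL u' s = s * (if u' = 0 then 1 else 0)"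

text \<open>Policy encoding: pol u q u' = P(u+ = u' | u, q).  Kernel
  T(s',u',q' | s,u,q) (the sum over x collapses since x = f(u',s) is deterministic).\<close>
definition kernel ::
  "real \<Rightarrow> nat \<Rightarrow> (nat \<Rightarrow> nat \<Rightarrow> nat \<Rightarrow> real) \<Rightarrow> nat \<times> nat \<times> nat \<Rightarrow> nat \<times> nat \<times> nat \<Rightarrow> real" where
  "kernel \<eta> N pol = (\<lambda>(s',u',q') (s,u,q).
     (\<Sum>x\<in>{0,1::nat}. pol u q u' * (if x = fL u' s then 1 else 0)
        * (if q' = gL N q x then 1 else 0) * battery \<eta> s' x s))"

definition is_policy :: "nat \<Rightarrow> (nat \<Rightarrow> nat \<Rightarrow> nat \<Rightarrow> real) \<Rightarrow> bool" where
  "is_policy N pol \<longleftrightarrow>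
     (\<forall>u\<le>N. \<forall>q\<le>N. (\<forall>u'\<le>N. pol u q u' \<ge> 0) \<and> (\<Sum>u'\<le>N. pol u q u') = 1)"

definition stationary ::
  "real \<Rightarrow> nat \<Rightarrow> (nat \<Rightarrow> nat \<Rightarrow> nat \<Rightarrow> real) \<Rightarrow> (nat \<times> nat \<times> nat \<Rightarrow> real) \<Rightarrow> bool" where
  "stationary \<eta> N pol \<pi> \<longleftrightarrow>
     (\<forall>z\<in>states N. \<pi> z \<ge> 0) \<and> (\<Sum>z\<in>states N. \<pi> z) = 1 \<and>
     (\<forall>z'\<in>states N. \<pi> z' = (\<Sum>z\<in>states N. \<pi> z * kernel \<eta> N pol z' z))"

definition unique_stationary ::
  "real \<Rightarrow> nat \<Rightarrow> (nat \<Rightarrow> nat \<Rightarrow> nat \<Rightarrow> real) \<Rightarrow> (nat \<times> nat \<times> nat \<Rightarrow> real) \<Rightarrow> bool" where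
  "unique_stationary \<eta> N pol \<pi> \<longleftrightarrow> stationary \<eta> N pol \<pi> \<and>
     (\<forall>\<sigma>. stationary \<eta> N pol \<sigma> \<longrightarrow> (\<forall>z\<in>states N. \<sigma> z = \<pi> z))"

definition margUQ :: "(nat \<times> nat \<times> nat \<Rightarrow> real) \<Rightarrow> nat \<Rightarrow> nat \<Rightarrow> real" where
  "margUQ \<pi> u q = \<pi> (0,u,q) + \<pi> (1,u,q)"

definition in_PL :: "real \<Rightarrow> nat \<Rightarrow> (nat \<Rightarrow> nat \<Rightarrow> nat \<Rightarrow> real) \<Rightarrow> (nat \<times> nat \<times> nat \<Rightarrow> real) \<Rightarrow> bool" where
  "in_PL \<eta> N pol \<pi> \<longleftrightarrow>
     is_policy N pol \<and> unique_stationary \<eta> N pol \<pi> \<and>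
     (\<forall>q<N. (\<forall>u\<le>N. q < u \<longrightarrow> margUQ \<pi> u q = 0) \<and>
            (\<forall>u\<le>N. \<forall>u'\<le>N. u' \<noteq> 0 \<and> u' \<noteq> u + 1 \<longrightarrow> pol u q u' = 0)) \<and>
     (\<forall>u\<le>N. pol u N 0 = 1)"

end

theory Submission
  imports Defs
begin

text \<open>If the action is \<open>u\<^sup>+ = 0\<close>, the input is \<open>x = s\<close>, so the battery is empty afterwards with
  probability \<open>1 - \<eta>\<close> whatever the past: \<open>\<pi>(S = 0 | U = 0, Q = q) = 1 - \<eta>\<close>.
  If the action is \<open>u\<^sup>+ = u + 1\<close>, the input is \<open>x = 0\<close> and, because the policy only increments
  or resets the counter, the state \<open>(u + 1, q + 1)\<close> is entered only from \<open>(u, q)\<close> (and no state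
  with \<open>u \<ge> 1, q = 0\<close> is entered at all).  An empty battery then stays empty with probability
  \<open>1 - \<eta>\<close> and a full one stays full, so the conditional probability of an empty battery is
  multiplied by \<open>1 - \<eta>\<close> at each increment.\<close>

definition increment_or_reset :: "nat \<Rightarrow> (nat \<Rightarrow> nat \<Rightarrow> nat \<Rightarrow> real) \<Rightarrow> bool" where
  "increment_or_reset N pol \<longleftrightarrow>
     (\<forall>q\<le>N. \<forall>u\<le>N. \<forall>u'\<le>N. pol u q u' \<noteq> 0 \<longrightarrow> u' = 0 \<or> (q < N \<and> u' = Suc u))"

lemma finite_states: "finite (states N)"
  by (rule finite_subset[of _ "{0..1} \<times> {0..N} \<times> {0..N}"]) (auto simp: states_def)

lemma is_policy_eq_0_if_eq_1:
  assumes "is_policy N pol" "u \<le> N" "q \<le> N" "v \<le> N" "pol u q v = 1" "v' \<le> N" "v' \<noteq> v"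
  shows "pol u q v' = 0"
proof -
  have nonneg: "\<forall>w\<in>{..N} - {v}. pol u q w \<ge> 0" and total: "(\<Sum>w\<le>N. pol u q w) = 1"
    using assms(1-3) unfolding is_policy_def by auto
  have "(\<Sum>w\<le>N. pol u q w) = pol u q v + (\<Sum>w\<in>{..N} - {v}. pol u q w)"
    using assms(4) by (simp add: sum.remove)
  then have "(\<Sum>w\<in>{..N} - {v}. pol u q w) = 0"
    using total assms(5) by simp
  then show ?thesis
    using nonneg assms(6,7) by (subst (asm) sum_nonneg_eq_0_iff) auto
qed

lemma in_PL_increment_or_reset:
  assumes "in_PL \<eta> N pol \<pi>"
  shows "increment_or_reset N pol"
  unfolding increment_or_reset_def
proof (intro allI impI)
  fix q u u' assume "q \<le> N" "u \<le> N" "u' \<le> N" "pol u q u' \<noteq> 0"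
  moreover have "is_policy N pol" "\<forall>u\<le>N. pol u N 0 = 1"
    and "\<forall>q<N. \<forall>u\<le>N. \<forall>u'\<le>N. u' \<noteq> 0 \<and> u' \<noteq> u + 1 \<longrightarrow> pol u q u' = 0"
    using assms unfolding in_PL_def by auto
  ultimately show "u' = 0 \<or> (q < N \<and> u' = Suc u)"
    using is_policy_eq_0_if_eq_1[of N pol u N 0 u'] by (cases "q < N") force+
qed

lemma stationary_eq:
  "stationary \<eta> N pol \<pi> \<Longrightarrow> z' \<in> states N \<Longrightarrow> \<pi> z' = (\<Sum>z\<in>states N. \<pi> z * kernel \<eta> N pol z' z)"
  by (simp add: stationary_def)

lemma margUQ_nonneg:
  assumes "stationary \<eta> N pol \<pi>" "u \<le> N" "q \<le> N"
  shows "margUQ \<pi> u q \<ge> 0"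
proof -
  have "\<forall>z\<in>states N. \<pi> z \<ge> 0" using assms(1) unfolding stationary_def by blast
  then show ?thesis using assms(2,3) by (simp add: margUQ_def states_def)
qed

lemma kernel_eq:
  assumes "s \<le> 1"
  shows "kernel \<eta> N pol (s',u',q') (s,u,q) =
    pol u q u' * (if q' = gL N q (fL u' s) then 1 else 0) * battery \<eta> s' (fL u' s) s"
proof -
  have "fL u' s \<in> {0,1}" using assms by (auto simp: fL_def)
  then show ?thesis unfolding kernel_def by (auto simp: fL_def)
qed

text \<open>Division-free form of \<open>P(S\<^sup>+ = 0 | U\<^sup>+ = 0, s, u, q) = 1 - \<eta>\<close>.\<close>

lemma kernel_reset_empty_full:
  assumes "z \<in> states N"
  shows "(1 - \<eta>) * kernel \<eta> N pol (1,0,q') z = \<eta> * kernel \<eta> N pol (0,0,q') z"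
  using assms by (cases z) (auto simp: states_def kernel_eq fL_def battery_def)

lemma stationary_reset_empty:
  assumes st: "stationary \<eta> N pol \<pi>" and "q \<le> N"
  shows "\<pi> (0,0,q) = (1 - \<eta>) * margUQ \<pi> 0 q"
proof -
  have "(1 - \<eta>) * \<pi> (1,0,q) = (\<Sum>z\<in>states N. \<pi> z * ((1 - \<eta>) * kernel \<eta> N pol (1,0,q) z))"
    using stationary_eq[OF st, of "(1,0,q)"] \<open>q \<le> N\<close>
    by (simp add: states_def sum_distrib_left algebra_simps)
  also have "\<dots> = (\<Sum>z\<in>states N. \<pi> z * (\<eta> * kernel \<eta> N pol (0,0,q) z))"
    by (intro sum.cong refl) (simp only: kernel_reset_empty_full)
  also have "\<dots> = \<eta> * \<pi> (0,0,q)"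
    using stationary_eq[OF st, of "(0,0,q)"] \<open>q \<le> N\<close>
    by (simp add: states_def sum_distrib_left algebra_simps)
  finally show ?thesis
    by (simp add: margUQ_def algebra_simps)
qed

lemma kernel_increment:
  assumes pol: "increment_or_reset N pol" and "(s,v,r) \<in> states N" "Suc u \<le> N"
  shows "kernel \<eta> N pol (s',Suc u,q') (s,v,r) =
    (if v = u \<and> q' = Suc r then pol u r (Suc u) * battery \<eta> s' 0 s else 0)"
proof -
  have "s \<le> 1" "v \<le> N" "r \<le> N" using assms(2) by (auto simp: states_def)
  then have K: "kernel \<eta> N pol (s',Suc u,q') (s,v,r) =
      pol v r (Suc u) * (if q' = gL N r 0 then 1 else 0) * battery \<eta> s' 0 s"
    by (simp add: kernel_eq fL_def)
  show ?thesis
  proof (cases "pol v r (Suc u) = 0")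
    case False
    then have "r < N" "v = u"
      using pol \<open>v \<le> N\<close> \<open>r \<le> N\<close> \<open>Suc u \<le> N\<close> unfolding increment_or_reset_def by auto
    then show ?thesis using K by (simp add: gL_def)
  qed (use K in auto)
qed

lemma stationary_increment_from_zero:
  assumes st: "stationary \<eta> N pol \<pi>" and pol: "increment_or_reset N pol"
    and "s' \<le> 1" "Suc u \<le> N"
  shows "\<pi> (s',Suc u,0) = 0"
proof -
  have "\<pi> (s',Suc u,0) = (\<Sum>z\<in>states N. \<pi> z * kernel \<eta> N pol (s',Suc u,0) z)"
    using stationary_eq[OF st] assms(3,4) by (simp add: states_def)
  also have "\<dots> = 0"
    by (rule sum.neutral) (use kernel_increment[OF pol] assms(4) in force)
  finally show ?thesis .
qed

lemma stationary_increment: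
  assumes st: "stationary \<eta> N pol \<pi>" and pol: "increment_or_reset N pol"
    and "s' \<le> 1" "Suc u \<le> N" "Suc r \<le> N"
  shows "\<pi> (s',Suc u,Suc r) =
    pol u r (Suc u) * (\<pi> (0,u,r) * battery \<eta> s' 0 0 + \<pi> (1,u,r) * battery \<eta> s' 0 1)"
proof -
  have "\<pi> (s',Suc u,Suc r) = (\<Sum>z\<in>states N. \<pi> z * kernel \<eta> N pol (s',Suc u,Suc r) z)"
    using stationary_eq[OF st] assms(3-5) by (simp add: states_def)
  also have "\<dots> = (\<Sum>z\<in>{(0,u,r),(1,u,r)}. \<pi> z * pol u r (Suc u) * battery \<eta> s' 0 (fst z))"
    by (rule sum.mono_neutral_cong_right)
      (use assms(4,5) kernel_increment[OF pol] in \<open>auto simp: finite_states states_def split: if_splits\<close>)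
  finally show ?thesis
    by (simp add: algebra_simps)
qed

lemma stationary_increment_empty:
  "stationary \<eta> N pol \<pi> \<Longrightarrow> increment_or_reset N pol \<Longrightarrow> Suc u \<le> N \<Longrightarrow> Suc r \<le> N \<Longrightarrow>
    \<pi> (0,Suc u,Suc r) = (1 - \<eta>) * pol u r (Suc u) * \<pi> (0,u,r)"
  by (simp add: stationary_increment battery_def)

lemma margUQ_increment:
  "stationary \<eta> N pol \<pi> \<Longrightarrow> increment_or_reset N pol \<Longrightarrow> Suc u \<le> N \<Longrightarrow> Suc r \<le> N \<Longrightarrow>
    margUQ \<pi> (Suc u) (Suc r) = pol u r (Suc u) * margUQ \<pi> u r"
  by (simp add: margUQ_def stationary_increment battery_def algebra_simps)

lemma stationary_empty_given_UQ:
  assumes st: "stationary \<eta> N pol \<pi>" and pol: "increment_or_reset N pol"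
    and "q \<le> N" "u \<le> N" "margUQ \<pi> u q > 0"
  shows "\<pi> (0,u,q) / margUQ \<pi> u q = (1 - \<eta>) ^ (u + 1)"
  using assms(3-5)
proof (induction u arbitrary: q)
  case 0
  then show ?case using stationary_reset_empty[OF st] by simp
next
  case (Suc u)
  then obtain r where q: "q = Suc r"
    using stationary_increment_from_zero[OF st pol] by (cases q) (auto simp: margUQ_def)
  define p where "p = pol u r (Suc u)"
  have marg: "margUQ \<pi> (Suc u) q = p * margUQ \<pi> u r"
    using margUQ_increment[OF st pol] Suc.prems q by (simp add: p_def)
  then have "p \<noteq> 0" "margUQ \<pi> u r > 0"
    using Suc.prems margUQ_nonneg[OF st, of u r] q by (auto simp: less_le)
  then have "\<pi> (0,Suc u,q) / margUQ \<pi> (Suc u) q = (1 - \<eta>) * (\<pi> (0,u,r) / margUQ \<pi> u r)"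
    using stationary_increment_empty[OF st pol] marg Suc.prems q by (simp add: p_def)
  also have "\<dots> = (1 - \<eta>) ^ (Suc u + 1)"
    using Suc.IH[of r] Suc.prems q \<open>margUQ \<pi> u r > 0\<close> by simp
  finally show ?case .
qed

theorem lemma4:
  fixes \<eta> :: real and N :: nat
    and pol :: "nat \<Rightarrow> nat \<Rightarrow> nat \<Rightarrow> real" and \<pi> :: "nat \<times> nat \<times> nat \<Rightarrow> real"
  assumes "0 \<le> \<eta>" "\<eta> \<le> 1"
    and "in_PL \<eta> N pol \<pi>"
  shows "\<forall>q\<le>N. \<forall>u\<le>N. margUQ \<pi> u q > 0 \<longrightarrow>
           \<pi> (0,u,q) / margUQ \<pi> u q = (1 - \<eta>) ^ (u + 1)"
proof -
  have "stationary \<eta> N pol \<pi>"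
    using assms(3) by (simp add: in_PL_def unique_stationary_def)
  moreover have "increment_or_reset N pol"
    using in_PL_increment_or_reset[OF assms(3)] .
  ultimately show ?thesis
    using stationary_empty_given_UQ by blast
qed

end
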